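(* For every integer $v\ge1$, $$\sum_{i=0}^{v-1}\left(2^{2v-2i}\,c_{2v,i}-\frac{2^{2i}}{(2v-1)!}\,s(v,i)\,\Gamma(2v-2i)\right)\left(\frac{\pi}{2}\right)^{2i-2v}\zeta(2v-2i)=2^{v}.$$
   Context: The generalized cosecant numbers $c_{\rho,k}$ are the coefficients in $\left(\frac{x}{\sin x}\right)^{\rho}=\sum_{k\ge0}c_{\rho,k}x^{2k}$. For integers $v\ge1$ and $0\le n\le v-1$, $s(v,n)$ denotes the $n$-th elementary symmetric polynomial evaluated at $1^2,2^2,\dots,(v-1)^2$, with $s(v,0)=1$. $\zeta$ is the Riemann zeta function. *)

theory Defs
  imports "HOL-Analysis.Analysis" "HOL-Computational_Algebra.Formal_Power_Series"
begin

definition sinc_fps :: "real fps" where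
  "sinc_fps = fps_shift 1 (fps_sin 1)"

definition cosec_num :: "nat \<Rightarrow> nat \<Rightarrow> real" where
  "cosec_num \<rho> k = fps_nth ((inverse sinc_fps) ^ \<rho>) (2 * k)"

definition esym_sq :: "nat \<Rightarrow> nat \<Rightarrow> real" where
  "esym_sq v n = (\<Sum>S | S \<subseteq> {1..<v} \<and> card S = n. \<Prod>k\<in>S. real k ^ 2)"

definition zeta_real :: "real \<Rightarrow> real" where
  "zeta_real s = (\<Sum>n. 1 / real (Suc n) powr s)"

end

theory Submission
  imports Defs
begin

text \<open>
  Herglotz's trick (a bounded \<open>g\<close> on \<open>(0, \<pi>)\<close> with \<open>g (x/2) + g ((x+\<pi>)/2) = 4 g x\<close> vanishes)
  gives \<open>1 / sin x ^ 2 = Z 2 x\<close>, where \<open>Z k x = (\<Sum>n\<in>\<int>. 1 / (x - n\<pi>) ^ k)\<close>.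
  Since \<open>(1 / sin ^ k)'' = k (k+1) / sin ^ (k+2) - k^2 / sin ^ k\<close> and \<open>(Z k)'' = k (k+1) Z (k+2)\<close>,
  differentiating twice per step gives, by induction on \<open>v\<close>,
  \<open>(2v-1)! / sin x ^ 2v = (\<Sum>j<v. C v j * Z (2v-2j) x)\<close> with \<open>C v j = 4^j s(v,j) (2v-2j-1)!\<close>.
  The numbers \<open>C v j / (2v-1)!\<close> obey the recurrence in \<open>v\<close> that the differential equation of
  \<open>(x / sin x) ^ n\<close> imposes on its coefficients, hence they are the cosecant numbers \<open>c(2v,j)\<close>.
  At \<open>x = \<pi>/4\<close> the points \<open>x - n\<pi>\<close> are \<open>\<pi>/4\<close> times the odd integers, so
  \<open>Z (2m) (\<pi>/4) = (2^2m - 1) (2/\<pi>)^2m \<zeta>(2m)\<close>. Hence the \<open>i\<close>-th summand of the theorem is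
  \<open>C v i * Z (2v-2i) (\<pi>/4) / (2v-1)!\<close>, and the sum is \<open>1 / sin (\<pi>/4) ^ 2v = 2^v\<close>.
\<close>

section \<open>The power series of \<open>(x / sin x)\<^sup>n\<close>\<close>

definition fps_theta :: "'a::comm_ring_1 fps \<Rightarrow> 'a fps" where
  "fps_theta f = fps_X * fps_deriv f"

lemma fps_theta_nth [simp]: "fps_nth (fps_theta f) n = of_nat n * fps_nth f n"
  unfolding fps_theta_def by (cases n) auto

lemma fps_theta_diff: "fps_theta (f - g) = fps_theta f - fps_theta g"
  and fps_theta_mult: "fps_theta (f * g) = fps_theta f * g + f * fps_theta g"
  and fps_theta_of_nat: "fps_theta (of_nat n) = 0"
  and fps_theta_1: "fps_theta 1 = 0"
  and fps_theta_of_nat_mult: "fps_theta (of_nat n * f) = of_nat n * fps_theta f"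
  and fps_theta_power: "fps_theta (f ^ n) = of_nat n * f ^ (n - 1) * fps_theta f"
  unfolding fps_theta_def by (simp_all add: fps_of_nat fps_deriv_power' algebra_simps)

lemma fps_X_mult_sinc: "fps_X * sinc_fps = fps_sin 1"
  unfolding sinc_fps_def by (intro fps_ext) (auto simp: fps_sin_def)

lemma sinc_fps_nth_0: "fps_nth sinc_fps 0 = 1"
  unfolding sinc_fps_def by simp

definition x_csc_fps :: "real fps" where
  "x_csc_fps = inverse sinc_fps"

definition x_cot_fps :: "real fps" where
  "x_cot_fps = fps_cos 1 * x_csc_fps"

lemma x_csc_mult_sinc: "x_csc_fps * sinc_fps = 1"
  unfolding x_csc_fps_def using sinc_fps_nth_0 by (intro inverse_mult_eq_1) simp

lemma fps_theta_sinc: "fps_theta sinc_fps = fps_cos 1 - sinc_fps"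
proof -
  have "fps_deriv (fps_X * sinc_fps) = fps_cos 1"
    by (simp only: fps_X_mult_sinc fps_sin_deriv) simp
  then show ?thesis unfolding fps_theta_def by (simp add: algebra_simps)
qed

lemma fps_theta_x_csc: "fps_theta x_csc_fps = x_csc_fps * (1 - x_cot_fps)"
proof -
  have "fps_theta x_csc_fps = - fps_theta sinc_fps * x_csc_fps ^ 2"
    unfolding fps_theta_def x_csc_fps_def using sinc_fps_nth_0 by (simp add: fps_inverse_deriv)
  also have "\<dots> = x_csc_fps * (1 - x_cot_fps)"
    using x_csc_mult_sinc unfolding fps_theta_sinc x_cot_fps_def power2_eq_square
    by (simp add: algebra_simps)
  finally show ?thesis .
qed

lemma x_cot_squared: "x_cot_fps ^ 2 = x_csc_fps ^ 2 - fps_X ^ 2"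
proof -
  have "fps_X = fps_X * sinc_fps * x_csc_fps"
    using x_csc_mult_sinc by (simp add: mult.assoc mult.commute[of sinc_fps])
  then have X2: "fps_X ^ 2 = fps_sin (1::real) ^ 2 * x_csc_fps ^ 2"
    unfolding fps_X_mult_sinc by (metis power_mult_distrib)
  have "x_cot_fps ^ 2 = fps_cos (1::real) ^ 2 * x_csc_fps ^ 2"
    unfolding x_cot_fps_def by (rule power_mult_distrib)
  also have "fps_cos (1::real) ^ 2 = 1 - fps_sin 1 ^ 2"
    using fps_sin_cos_sum_of_squares[of "1::real"] by (simp add: algebra_simps)
  finally show ?thesis
    unfolding X2 by (simp add: algebra_simps)
qed

lemma fps_theta_x_cot: "fps_theta x_cot_fps = x_cot_fps - x_csc_fps ^ 2"
proof -
  have "fps_theta (fps_cos (1::real)) = - fps_X * fps_sin 1"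
    unfolding fps_theta_def by (simp add: fps_cos_deriv flip: fps_const_neg)
  then have "fps_theta (fps_cos 1) * x_csc_fps = - (fps_X ^ 2)"
    using x_csc_mult_sinc
    by (simp add: fps_X_mult_sinc[symmetric] power2_eq_square algebra_simps)
  then have "fps_theta x_cot_fps = x_cot_fps - x_cot_fps ^ 2 - fps_X ^ 2"
    unfolding x_cot_fps_def fps_theta_mult fps_theta_x_csc
    by (simp add: algebra_simps power2_eq_square)
  then show ?thesis by (simp add: x_cot_squared)
qed

lemma fps_theta_x_csc_power:
  "fps_theta (x_csc_fps ^ n) = of_nat n * x_csc_fps ^ n * (1 - x_cot_fps)"
proof (cases n)
  case (Suc m)
  then show ?thesis
    unfolding fps_theta_power fps_theta_x_csc by (simp add: algebra_simps)
qed (simp add: fps_theta_1)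

lemma x_csc_power_ode:
  "of_nat (n * (n + 1)) * x_csc_fps ^ (n + 2) =
     of_nat (n * (n + 1)) * x_csc_fps ^ n - of_nat (2 * n + 1) * fps_theta (x_csc_fps ^ n)
     + fps_theta (fps_theta (x_csc_fps ^ n)) + of_nat (n ^ 2) * (fps_X ^ 2 * x_csc_fps ^ n)"
proof -
  have theta2: "fps_theta (fps_theta (x_csc_fps ^ n))
      = of_nat n * (of_nat n * x_csc_fps ^ n * (1 - x_cot_fps) ^ 2
                    - x_csc_fps ^ n * (x_cot_fps - x_csc_fps ^ 2))"
    unfolding fps_theta_x_csc_power mult.assoc fps_theta_of_nat_mult fps_theta_mult
      fps_theta_diff fps_theta_1 fps_theta_x_cot
    by (simp add: fps_theta_x_csc_power fps_theta_of_nat algebra_simps power2_eq_square)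
  have X2: "fps_X ^ 2 = x_csc_fps ^ 2 - x_cot_fps ^ 2"
    by (simp add: x_cot_squared)
  have ring: "of_nat (n * (n + 1)) * (C * Y) =
     of_nat (n * (n + 1)) * Y - of_nat (2 * n + 1) * (of_nat n * Y * (1 - Z))
     + of_nat n * (of_nat n * Y * (1 - Z) ^ 2 - Y * (Z - C))
     + of_nat (n ^ 2) * ((C - Z ^ 2) * Y)" for C Y Z :: "real fps"
    by (simp add: algebra_simps power2_eq_square)
  show ?thesis
    unfolding theta2 unfolding X2 fps_theta_x_csc_power power_add
    using ring[of "x_csc_fps ^ 2" "x_csc_fps ^ n" x_cot_fps] by (simp add: mult.commute)
qed

lemma x_csc_power_coeff_rec:
  "real (n * (n + 1)) * fps_nth (x_csc_fps ^ (n + 2)) k =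
     (real n - real k) * (real n + 1 - real k) * fps_nth (x_csc_fps ^ n) k
     + (if k < 2 then 0 else real n ^ 2 * fps_nth (x_csc_fps ^ n) (k - 2))"
proof -
  have nth_of_nat_mult: "fps_nth (of_nat c * f) k = of_nat c * fps_nth f k" for c and f :: "real fps"
    by (simp flip: fps_of_nat)
  have "fps_nth (of_nat (n * (n + 1)) * x_csc_fps ^ (n + 2)) k =
      real (n * (n + 1)) * fps_nth (x_csc_fps ^ n) k - real (2 * n + 1) * (real k * fps_nth (x_csc_fps ^ n) k)
       + real k * (real k * fps_nth (x_csc_fps ^ n) k)
       + real (n ^ 2) * (if k < 2 then 0 else fps_nth (x_csc_fps ^ n) (k - 2))"
    unfolding x_csc_power_ode fps_add_nth fps_sub_nth nth_of_nat_mult fps_theta_nth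
      fps_X_power_mult_nth by simp
  then show ?thesis
    unfolding nth_of_nat_mult by (simp add: algebra_simps power2_eq_square)
qed

section \<open>The coefficients \<open>(2v - 1)! c\<^sub>2\<^sub>v\<^sub>,\<^sub>j\<close>\<close>

lemma sum_prod_card_subsets_insert:
  fixes f :: "'a \<Rightarrow> 'b::comm_semiring_1"
  assumes "finite A" "a \<notin> A" "i \<ge> 1"
  shows "(\<Sum>S | S \<subseteq> insert a A \<and> card S = i. \<Prod>k\<in>S. f k)
       = (\<Sum>S | S \<subseteq> A \<and> card S = i. \<Prod>k\<in>S. f k)
         + f a * (\<Sum>S | S \<subseteq> A \<and> card S = i - 1. \<Prod>k\<in>S. f k)"
proof -
  obtain j where i: "i = Suc j" using assms(3) by (cases i) auto
  let ?P = "{S. S \<subseteq> A \<and> card S = i}"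
  let ?Q = "{S. S \<subseteq> A \<and> card S = j}"
  have fin: "finite ?P" "finite ?Q"
    using assms(1) by (auto intro: finite_subset[of _ "Pow A"])
  have split: "{S. S \<subseteq> insert a A \<and> card S = i} = ?P \<union> insert a ` ?Q"
  proof (intro equalityI subsetI)
    fix S assume S: "S \<in> {S. S \<subseteq> insert a A \<and> card S = i}"
    show "S \<in> ?P \<union> insert a ` ?Q"
    proof (cases "a \<in> S")
      case True
      then have "S = insert a (S - {a})" "S - {a} \<in> ?Q"
        using S assms i by (auto simp: card_Diff_singleton finite_subset)
      then show ?thesis by blast
    qed (use S in auto)
  qed (use assms i in \<open>auto simp: card_insert_if finite_subset\<close>)
  have inj: "inj_on (insert a) ?Q"
    using assms(2) by (intro inj_onI) (metis Diff_insert_absorb mem_Collect_eq subset_iff)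
  have "(\<Sum>S | S \<subseteq> insert a A \<and> card S = i. \<Prod>k\<in>S. f k)
      = (\<Sum>S\<in>?P. \<Prod>k\<in>S. f k) + (\<Sum>T\<in>?Q. \<Prod>k\<in>insert a T. f k)"
    unfolding split using assms(2) fin
    by (subst sum.union_disjoint) (auto simp: sum.reindex[OF inj])
  also have "(\<Sum>T\<in>?Q. \<Prod>k\<in>insert a T. f k) = f a * (\<Sum>T\<in>?Q. \<Prod>k\<in>T. f k)"
    unfolding sum_distrib_left using assms by (intro sum.cong) (auto intro: prod.insert finite_subset)
  finally show ?thesis by (simp add: i)
qed

lemma esym_sq_0 [simp]: "esym_sq v 0 = 1"
proof -
  have "{S. S \<subseteq> {1..<v} \<and> card S = 0} = {{}}"
    by (auto dest: finite_subset)
  then show ?thesis unfolding esym_sq_def by simp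
qed

lemma esym_sq_eq_0:
  assumes "v \<le> i" "0 < i"
  shows "esym_sq v i = 0"
proof -
  have "card S \<noteq> i" if "S \<subseteq> {1..<v}" for S
    using card_mono[OF _ that] assms by simp
  then have "{S. S \<subseteq> {1..<v} \<and> card S = i} = {}"
    by blast
  then show ?thesis unfolding esym_sq_def by (simp only: sum.empty)
qed

lemma esym_sq_Suc:
  assumes "v \<ge> 1" "i \<ge> 1"
  shows "esym_sq (Suc v) i = esym_sq v i + real v ^ 2 * esym_sq v (i - 1)"
proof -
  have "{1..<Suc v} = insert v {1..<v}" using assms(1) by auto
  then show ?thesis
    unfolding esym_sq_def using sum_prod_card_subsets_insert[of "{1..<v}" v i] assms(2) by simp
qed

lemma fact_odd_Suc:
  assumes "d \<ge> 1"
  shows "(fact (2 * d + 1) :: 'a::semiring_char_0) = of_nat ((2 * d + 1) * (2 * d)) * fact (2 * d - 1)"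
proof -
  obtain e where "2 * d = Suc e" using assms by (cases d) auto
  then show ?thesis by (simp add: algebra_simps)
qed

definition csc_pow_coeff :: "nat \<Rightarrow> nat \<Rightarrow> real" where
  "csc_pow_coeff v j = 4 ^ j * esym_sq v j * fact (2 * (v - j) - 1)"

lemma csc_pow_coeff_Suc:
  assumes "v \<ge> 1" "i \<le> v"
  shows "csc_pow_coeff (Suc v) i =
           real (2 * (v - i)) * real (2 * (v - i) + 1) * csc_pow_coeff v i
           + (if i = 0 then 0 else 4 * real v ^ 2 * csc_pow_coeff v (i - 1))"
proof -
  have fact_Suc_v: "fact (2 * (Suc v - i) - 1) = (fact (2 * (v - i) + 1) :: real)"
    using assms(2) by (simp add: Suc_diff_le)
  have first: "4 ^ i * esym_sq v i * fact (2 * (v - i) + 1)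
      = real (2 * (v - i)) * real (2 * (v - i) + 1) * csc_pow_coeff v i"
  proof (cases "i < v")
    case True
    then have "(fact (2 * (v - i) + 1) :: real)
        = of_nat ((2 * (v - i) + 1) * (2 * (v - i))) * fact (2 * (v - i) - 1)"
      by (intro fact_odd_Suc) simp
    then show ?thesis
      unfolding csc_pow_coeff_def of_nat_mult by (simp only: mult_ac)
  next
    case False
    then show ?thesis
      using assms esym_sq_eq_0[of v i] by simp
  qed
  show ?thesis
  proof (cases "i = 0")
    case True
    then show ?thesis using first fact_Suc_v unfolding csc_pow_coeff_def by simp
  next
    case False
    have "csc_pow_coeff (Suc v) i
        = 4 ^ i * esym_sq v i * fact (2 * (v - i) + 1)
          + 4 ^ i * real v ^ 2 * esym_sq v (i - 1) * fact (2 * (v - i) + 1)"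
      using esym_sq_Suc[OF assms(1)] False unfolding csc_pow_coeff_def fact_Suc_v
      by (simp add: algebra_simps del: fact_Suc)
    also have "4 ^ i * real v ^ 2 * esym_sq v (i - 1) * fact (2 * (v - i) + 1)
        = 4 * real v ^ 2 * csc_pow_coeff v (i - 1)"
    proof -
      have "fact (2 * (v - (i - 1)) - 1) = (fact (2 * (v - i) + 1) :: real)"
        using False assms(2) by (simp add: Suc_diff_le)
      moreover have "(4::real) ^ i = 4 * 4 ^ (i - 1)"
        using False by (simp flip: power_Suc)
      ultimately show ?thesis unfolding csc_pow_coeff_def by simp
    qed
    finally show ?thesis unfolding first using False by simp
  qed
qed

lemma csc_pow_coeff_sum_Suc:
  assumes "1 \<le> v"
  shows "(\<Sum>j<Suc v. csc_pow_coeff (Suc v) j * z (2 * (Suc v - j)))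
       = (\<Sum>j<v. csc_pow_coeff v j * real (2 * (v - j)) * real (2 * (v - j) + 1) * z (2 * (v - j) + 2))
         + 4 * real v ^ 2 * (\<Sum>j<v. csc_pow_coeff v j * z (2 * (v - j)))"
proof -
  have "(\<Sum>j<Suc v. csc_pow_coeff (Suc v) j * z (2 * (Suc v - j)))
      = (\<Sum>j<Suc v. real (2 * (v - j)) * real (2 * (v - j) + 1) * csc_pow_coeff v j * z (2 * (Suc v - j)))
        + (\<Sum>j<Suc v. (if j = 0 then 0 else 4 * real v ^ 2 * csc_pow_coeff v (j - 1)) * z (2 * (Suc v - j)))"
    using assms by (simp add: csc_pow_coeff_Suc sum.distrib[symmetric] distrib_right)
  also have "(\<Sum>j<Suc v. real (2 * (v - j)) * real (2 * (v - j) + 1) * csc_pow_coeff v j * z (2 * (Suc v - j)))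
      = (\<Sum>j<v. csc_pow_coeff v j * real (2 * (v - j)) * real (2 * (v - j) + 1) * z (2 * (v - j) + 2))"
    by (simp add: Suc_diff_le mult_ac)
  also have "(\<Sum>j<Suc v. (if j = 0 then 0 else 4 * real v ^ 2 * csc_pow_coeff v (j - 1)) * z (2 * (Suc v - j)))
      = 4 * real v ^ 2 * (\<Sum>j<v. csc_pow_coeff v j * z (2 * (v - j)))"
    unfolding sum.lessThan_Suc_shift by (simp add: sum_distrib_left mult_ac)
  finally show ?thesis .
qed

lemma cosec_num_rec:
  assumes "i \<le> v"
  shows "real (2 * v * (2 * v + 1)) * cosec_num (2 * Suc v) i
       = real (2 * (v - i)) * real (2 * (v - i) + 1) * cosec_num (2 * v) i
         + (if i = 0 then 0 else 4 * real v ^ 2 * cosec_num (2 * v) (i - 1))"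
proof -
  define a where "a n k = fps_nth (x_csc_fps ^ n) k" for n k
  have cosec: "cosec_num (2 * w) j = a (2 * w) (2 * j)" for w j
    unfolding cosec_num_def a_def x_csc_fps_def by (simp add: power_mult)
  have "real (2 * v * (2 * v + 1)) * a (2 * v + 2) (2 * i)
      = (real (2 * v) - real (2 * i)) * (real (2 * v) + 1 - real (2 * i)) * a (2 * v) (2 * i)
        + (if 2 * i < 2 then 0 else real (2 * v) ^ 2 * a (2 * v) (2 * i - 2))"
    unfolding a_def by (rule x_csc_power_coeff_rec)
  also have "\<dots> = real (2 * (v - i)) * real (2 * (v - i) + 1) * a (2 * v) (2 * i)
        + (if i = 0 then 0 else 4 * real v ^ 2 * a (2 * v) (2 * (i - 1)))"
  proof -
    have "real (2 * v) - real (2 * i) = real (2 * (v - i))"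
      "real (2 * v) + 1 - real (2 * i) = real (2 * (v - i) + 1)"
      using assms by (simp_all add: of_nat_diff)
    moreover have "(if 2 * i < 2 then 0 else real (2 * v) ^ 2 * a (2 * v) (2 * i - 2))
        = (if i = 0 then 0 else 4 * real v ^ 2 * a (2 * v) (2 * (i - 1)))"
      by (cases i) (simp_all add: power_mult_distrib)
    ultimately show ?thesis by (simp only:)
  qed
  finally show ?thesis
    using cosec[of "Suc v" i] by (simp add: cosec)
qed

lemma cosec_num_eq_csc_pow_coeff:
  assumes "v \<ge> 1" "i < v"
  shows "cosec_num (2 * v) i = csc_pow_coeff v i / fact (2 * v - 1)"
  using assms
proof (induction v arbitrary: i rule: nat_induct_at_least)
  case base
  have "fps_nth x_csc_fps 0 = 1"
    unfolding x_csc_fps_def using sinc_fps_nth_0 by simp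
  then show ?case
    using base unfolding cosec_num_def csc_pow_coeff_def x_csc_fps_def[symmetric]
    by (simp add: fps_mult_nth power2_eq_square)
next
  case (Suc v)
  define F where "F = (fact (2 * v - 1) :: real)"
  have "real (2 * (v - i)) * real (2 * (v - i) + 1) * cosec_num (2 * v) i
      = real (2 * (v - i)) * real (2 * (v - i) + 1) * csc_pow_coeff v i / F"
    using Suc.IH[of i] by (cases "i < v") (simp_all add: F_def)
  moreover have "(if i = 0 then 0 else 4 * real v ^ 2 * cosec_num (2 * v) (i - 1))
      = (if i = 0 then 0 else 4 * real v ^ 2 * csc_pow_coeff v (i - 1)) / F"
    using Suc.IH[of "i - 1"] Suc.prems by (simp add: F_def)
  ultimately have "real (2 * v * (2 * v + 1)) * cosec_num (2 * Suc v) i = csc_pow_coeff (Suc v) i / F"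
    using cosec_num_rec[of i v] csc_pow_coeff_Suc[OF Suc.hyps, of i] Suc.prems
    by (simp add: add_divide_distrib)
  moreover have "real (2 * v * (2 * v + 1)) > 0"
    using Suc.hyps unfolding of_nat_0_less_iff by simp
  ultimately have "cosec_num (2 * Suc v) i = csc_pow_coeff (Suc v) i / F / real (2 * v * (2 * v + 1))"
    by (simp only: eq_divide_eq mult.commute) simp
  moreover have "fact (2 * Suc v - 1) = real (2 * v * (2 * v + 1)) * F"
    using fact_odd_Suc[OF Suc.hyps, where 'a=real] by (simp add: F_def mult.commute)
  ultimately show ?case
    by (simp add: mult.commute)
qed

section \<open>Lattice sums over \<open>\<pi>\<int>\<close>\<close>

lemma DERIV_inverse_power:
  fixes f :: "'a::real_normed_field \<Rightarrow> 'a"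
  assumes "(f has_field_derivative D) (at x within S)" "f x \<noteq> 0"
  shows "((\<lambda>x. 1 / f x ^ n) has_field_derivative - of_nat n * D / f x ^ Suc n) (at x within S)"
proof -
  have "((\<lambda>x. f x ^ n) has_field_derivative of_nat n * (D * f x ^ (n - 1))) (at x within S)"
    using DERIV_power[OF assms(1)] by simp
  then have "((\<lambda>x. inverse (f x ^ n)) has_field_derivative
          - (inverse (f x ^ n) * (of_nat n * (D * f x ^ (n - 1))) * inverse (f x ^ n))) (at x within S)"
    by (rule DERIV_inverse') (use assms(2) in simp)
  moreover have "inverse (f x ^ n) * (of_nat n * (D * f x ^ (n - 1))) * inverse (f x ^ n)
      = of_nat n * D / f x ^ Suc n"
    using assms(2) by (cases n) (simp_all add: field_simps)
  ultimately show ?thesis by (simp add: inverse_eq_divide)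
qed

lemma abs_inverse_power_le:
  fixes y :: real
  assumes "real n \<le> \<bar>y\<bar>" "1 \<le> n" "2 \<le> k"
  shows "\<bar>1 / y ^ k\<bar> \<le> 1 / real n ^ 2"
proof -
  have "real n ^ 2 \<le> real n ^ k" using assms by (intro power_increasing) auto
  also have "\<dots> \<le> \<bar>y\<bar> ^ k" using assms by (intro power_mono) auto
  finally show ?thesis
    using assms(2) by (simp add: abs_divide power_abs frac_le)
qed

lemma has_sum_int_split:
  fixes f :: "int \<Rightarrow> 'a::topological_comm_monoid_add"
  assumes "((\<lambda>n. f (int n)) has_sum a) UNIV" "((\<lambda>n. f (- int (Suc n))) has_sum b) UNIV"
  shows "(f has_sum (a + b)) UNIV"
proof -
  have "(f has_sum a) (range int)" "(f has_sum b) (range (\<lambda>n. - int (Suc n)))"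
    using assms by (simp_all add: has_sum_reindex inj_on_def o_def)
  moreover have "range int \<inter> range (\<lambda>n. - int (Suc n)) = {}"
    by auto
  ultimately have "(f has_sum (a + b)) (range int \<union> range (\<lambda>n. - int (Suc n)))"
    by (rule has_sum_Un_disjoint)
  moreover have "range int \<union> range (\<lambda>n. - int (Suc n)) = UNIV"
  proof -
    have "n \<in> range int \<or> n \<in> range (\<lambda>n. - int (Suc n))" for n :: int
    proof (cases "n \<ge> 0")
      case True
      then have "n = int (nat n)" by simp
      then show ?thesis by blast
    next
      case False
      then have "n = - int (Suc (nat (- n - 1)))" by simp
      then show ?thesis by blast
    qed
    then show ?thesis by blast
  qed
  ultimately show ?thesis by simp
qed

lemma summable_const_div_square: "summable (\<lambda>n. c / real n ^ 2)"
  using summable_mult[OF inverse_power_summable[of 2, where 'a=real], of c] by (simp add: divide_inverse)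

lemma summable_abs_if_inverse_square_bound:
  fixes f :: "nat \<Rightarrow> real"
  assumes "\<And>n. 2 \<le> n \<Longrightarrow> \<bar>f n\<bar> \<le> C / real n ^ 2"
  shows "summable (\<lambda>n. \<bar>f n\<bar>)"
  using assms
  by (intro summable_comparison_test_ev[OF _ summable_const_div_square] eventually_sequentiallyI) simp

definition pi_lattice_term :: "nat \<Rightarrow> real \<Rightarrow> nat \<Rightarrow> real" where
  "pi_lattice_term k x n = 1 / (x - real n * pi) ^ k + 1 / (x + real (Suc n) * pi) ^ k"

definition pi_lattice_sum :: "nat \<Rightarrow> real \<Rightarrow> real" where
  "pi_lattice_sum k x = (\<Sum>n. pi_lattice_term k x n)"

lemma pi_lattice_term_bounds:
  assumes "0 \<le> x" "x \<le> pi" "2 \<le> n" "2 \<le> k"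
  shows "\<bar>1 / (x - real n * pi) ^ k\<bar> \<le> 1 / real n ^ 2"
    and "\<bar>1 / (x + real (Suc n) * pi) ^ k\<bar> \<le> 1 / real n ^ 2"
    and "\<bar>pi_lattice_term k x n\<bar> \<le> 2 / real n ^ 2"
proof -
  have "real n \<le> 3 * (real n - 1)" using assms(3) by simp
  also have "\<dots> \<le> pi * (real n - 1)" using assms(3) pi_gt3 by (intro mult_right_mono) auto
  also have "\<dots> \<le> \<bar>x - real n * pi\<bar>" using assms(2) by (simp add: algebra_simps)
  finally show le1: "\<bar>1 / (x - real n * pi) ^ k\<bar> \<le> 1 / real n ^ 2"
    using assms by (intro abs_inverse_power_le) auto
  have "real n \<le> real (Suc n) * 1" by simp
  also have "\<dots> \<le> real (Suc n) * pi" using pi_gt3 by (intro mult_left_mono) auto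
  also have "\<dots> \<le> \<bar>x + real (Suc n) * pi\<bar>" using assms(1) by simp
  finally show le2: "\<bar>1 / (x + real (Suc n) * pi) ^ k\<bar> \<le> 1 / real n ^ 2"
    using assms by (intro abs_inverse_power_le) auto
  show "\<bar>pi_lattice_term k x n\<bar> \<le> 2 / real n ^ 2"
    unfolding pi_lattice_term_def using le1 le2 by linarith
qed

lemma summable_pi_lattice_term:
  assumes "0 \<le> x" "x \<le> pi" "2 \<le> k"
  shows "summable (pi_lattice_term k x)"
  using summable_abs_if_inverse_square_bound[of "pi_lattice_term k x" 2] pi_lattice_term_bounds(3) assms
  by (auto intro: summable_rabs_cancel)

lemma pi_lattice_sum_has_sum:
  assumes "0 \<le> x" "x \<le> pi" "2 \<le> k"
  shows "((\<lambda>n::int. 1 / (x - of_int n * pi) ^ k) has_sum pi_lattice_sum k x) UNIV"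
proof -
  have has_sum: "(f has_sum (\<Sum>n. f n)) UNIV"
    if "summable (\<lambda>n. \<bar>f n\<bar>)" for f :: "nat \<Rightarrow> real"
    using that summable_sums[OF summable_rabs_cancel[OF that]]
    by (intro norm_summable_imp_has_sum) simp_all
  have pos: "summable (\<lambda>n. \<bar>1 / (x - real n * pi) ^ k\<bar>)"
    using pi_lattice_term_bounds(1) assms by (intro summable_abs_if_inverse_square_bound) auto
  have neg: "summable (\<lambda>n. \<bar>1 / (x + real (Suc n) * pi) ^ k\<bar>)"
    using pi_lattice_term_bounds(2) assms by (intro summable_abs_if_inverse_square_bound) auto
  have "((\<lambda>n::int. 1 / (x - of_int n * pi) ^ k) has_sum
          (\<Sum>n. 1 / (x - real n * pi) ^ k) + (\<Sum>n. 1 / (x + real (Suc n) * pi) ^ k)) UNIV"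
    using has_sum[OF pos] has_sum[OF neg] by (intro has_sum_int_split) (simp_all add: algebra_simps)
  also have "(\<Sum>n. 1 / (x - real n * pi) ^ k) + (\<Sum>n. 1 / (x + real (Suc n) * pi) ^ k)
      = pi_lattice_sum k x"
    unfolding pi_lattice_sum_def pi_lattice_term_def
    using pos neg by (intro suminf_add) (auto intro: summable_rabs_cancel)
  finally show ?thesis .
qed

lemma pi_lattice_term_deriv:
  assumes "0 < y" "y < pi"
  shows "((\<lambda>y. pi_lattice_term k y n) has_field_derivative
            - real k * pi_lattice_term (Suc k) y n) (at y within S)"
proof -
  have lin: "((\<lambda>y. y + c) has_field_derivative 1) (at y within S)" for c
    by (auto intro!: derivative_eq_intros)
  have "y - real n * pi \<noteq> 0"
  proof (cases n)
    case (Suc m)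
    then have "pi \<le> real n * pi" by simp
    then show ?thesis using assms by auto
  qed (use assms in auto)
  then have d1: "((\<lambda>y. 1 / (y - real n * pi) ^ k) has_field_derivative
                  - real k / (y - real n * pi) ^ Suc k) (at y within S)"
    using DERIV_inverse_power[OF lin[of "- real n * pi"], of k] by simp
  have "0 < y + real (Suc n) * pi" using assms by (intro add_pos_nonneg) auto
  then have d2: "((\<lambda>y. 1 / (y + real (Suc n) * pi) ^ k) has_field_derivative
                  - real k / (y + real (Suc n) * pi) ^ Suc k) (at y within S)"
    using DERIV_inverse_power[OF lin[of "real (Suc n) * pi"], of k] by simp
  show ?thesis
    using DERIV_add[OF d1 d2] unfolding pi_lattice_term_def by (simp add: distrib_left)
qed

lemma pi_lattice_sum_deriv:
  assumes "0 < x" "x < pi" "2 \<le> k"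
  shows "(pi_lattice_sum k has_field_derivative - real k * pi_lattice_sum (Suc k) x) (at x)"
proof -
  define S where "S = {0<..<pi}"
  have "uniformly_convergent_on S (\<lambda>n y. \<Sum>i<n. - real k * pi_lattice_term (Suc k) y i)"
  proof (rule Weierstrass_m_test'_ev)
    show "eventually (\<lambda>n. \<forall>y\<in>S.
            norm (- real k * pi_lattice_term (Suc k) y n) \<le> real k * (2 / real n ^ 2)) sequentially"
    proof (intro eventually_sequentiallyI[of 2] ballI)
      fix n :: nat and y assume "2 \<le> n" "y \<in> S"
      then have "\<bar>pi_lattice_term (Suc k) y n\<bar> \<le> 2 / real n ^ 2"
        using assms by (intro pi_lattice_term_bounds(3)) (auto simp: S_def)
      then show "norm (- real k * pi_lattice_term (Suc k) y n) \<le> real k * (2 / real n ^ 2)"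
        unfolding real_norm_def abs_mult abs_minus_cancel abs_of_nat by (rule mult_left_mono) simp
    qed
    show "summable (\<lambda>n. real k * (2 / real n ^ 2))"
      by (intro summable_mult summable_const_div_square)
  qed
  then have "(pi_lattice_sum k has_field_derivative (\<Sum>n. - real k * pi_lattice_term (Suc k) x n)) (at x)"
    unfolding pi_lattice_sum_def[abs_def]
    using assms summable_pi_lattice_term[of x k]
    by (intro has_field_derivative_series'(2)[OF _ pi_lattice_term_deriv]) (auto simp: S_def)
  moreover have "(\<Sum>n. - real k * pi_lattice_term (Suc k) x n) = - real k * pi_lattice_sum (Suc k) x"
    unfolding pi_lattice_sum_def using assms summable_pi_lattice_term[of x "Suc k"]
    by (intro suminf_mult) auto
  ultimately show ?thesis by simp
qed

section \<open>Partial fractions for powers of the cosecant\<close>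

lemma pi_lattice_sum_duplication:
  assumes "0 \<le> x" "x \<le> pi" "2 \<le> k"
  shows "pi_lattice_sum k (x / 2) + pi_lattice_sum k ((x + pi) / 2) = 2 ^ k * pi_lattice_sum k x"
proof -
  define f where "f n = 1 / (x - of_int n * pi) ^ k" for n :: int
  have half: "(f has_sum pi_lattice_sum k ((x + of_int c * pi) / 2) / 2 ^ k) (range (\<lambda>n. 2 * n - c))"
    if "c \<in> {0, 1}" for c :: int
  proof -
    have "((\<lambda>n::int. 1 / ((x + of_int c * pi) / 2 - of_int n * pi) ^ k / 2 ^ k) has_sum
            pi_lattice_sum k ((x + of_int c * pi) / 2) / 2 ^ k) UNIV"
      using assms that by (intro has_sum_divide_const pi_lattice_sum_has_sum) auto
    moreover have "1 / ((x + of_int c * pi) / 2 - of_int n * pi) ^ k / 2 ^ k = f (2 * n - c)" for n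
      by (simp add: f_def field_simps power_divide)
    ultimately show ?thesis by (simp add: has_sum_reindex inj_on_def o_def)
  qed
  have even: "(f has_sum pi_lattice_sum k (x / 2) / 2 ^ k) (range (\<lambda>n. 2 * n))"
    using half[of 0] by simp
  have odd: "(f has_sum pi_lattice_sum k ((x + pi) / 2) / 2 ^ k) (range (\<lambda>n. 2 * n - 1))"
    using half[of 1] by simp
  have "range (\<lambda>n::int. 2 * n) \<inter> range (\<lambda>n. 2 * n - 1) = {}"
    by auto presburger
  from has_sum_Un_disjoint[OF even odd this]
  have "(f has_sum (pi_lattice_sum k (x / 2) / 2 ^ k + pi_lattice_sum k ((x + pi) / 2) / 2 ^ k))
          (range (\<lambda>n. 2 * n) \<union> range (\<lambda>n. 2 * n - 1))" .
  moreover have "range (\<lambda>n::int. 2 * n) \<union> range (\<lambda>n. 2 * n - 1) = UNIV"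
  proof -
    have "n \<in> range (\<lambda>n. 2 * n) \<or> n \<in> range (\<lambda>n. 2 * n - 1)" for n :: int
      by (cases "even n") (auto simp: image_iff elim!: evenE oddE intro: exI[of _ "n div 2 + 1"])
    then show ?thesis by blast
  qed
  moreover have "(f has_sum pi_lattice_sum k x) UNIV"
    unfolding f_def using assms by (rule pi_lattice_sum_has_sum)
  ultimately show ?thesis
    using has_sum_unique by (fastforce simp: field_simps)
qed

lemma bounded_duplication_imp_zero:
  fixes g :: "real \<Rightarrow> real"
  assumes bound: "\<And>y. y \<in> {0<..<a} \<Longrightarrow> \<bar>g y\<bar> \<le> K"
    and dup: "\<And>y. y \<in> {0<..<a} \<Longrightarrow> g (y / 2) + g ((y + a) / 2) = 4 * g y"
    and x: "x \<in> {0<..<a}"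
  shows "g x = 0"
proof -
  define M where "M = (SUP y\<in>{0<..<a}. \<bar>g y\<bar>)"
  have bdd: "bdd_above ((\<lambda>y. \<bar>g y\<bar>) ` {0<..<a})"
    using bound by (intro bdd_aboveI2) auto
  have le_M: "\<bar>g y\<bar> \<le> M" if "y \<in> {0<..<a}" for y
    unfolding M_def using bdd that by (rule cSUP_upper2) simp
  have "\<bar>g y\<bar> \<le> M / 2" if y: "y \<in> {0<..<a}" for y
  proof -
    have "y / 2 \<in> {0<..<a}" "(y + a) / 2 \<in> {0<..<a}" using y by auto
    then have "\<bar>g (y / 2)\<bar> + \<bar>g ((y + a) / 2)\<bar> \<le> M + M" using le_M by (intro add_mono)
    moreover have "4 * \<bar>g y\<bar> \<le> \<bar>g (y / 2)\<bar> + \<bar>g ((y + a) / 2)\<bar>"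
      using dup[OF y] abs_triangle_ineq[of "g (y / 2)" "g ((y + a) / 2)"] by simp
    ultimately show ?thesis by simp
  qed
  then have "M \<le> M / 2"
    unfolding M_def using x by (intro cSUP_least) auto
  then show ?thesis using le_M[OF x] by simp
qed

lemma inverse_sin_squared_duplication:
  assumes "sin x \<noteq> 0"
  shows "1 / sin (x / 2) ^ 2 + 1 / sin ((x + pi) / 2) ^ 2 = 4 / sin x ^ 2"
proof -
  have "sin ((x + pi) / 2) = cos (x / 2)" by (simp add: add_divide_distrib sin_add)
  moreover have "sin x = 2 * sin (x / 2) * cos (x / 2)" using sin_double[of "x / 2"] by simp
  moreover have "sin (x / 2) ^ 2 + cos (x / 2) ^ 2 = 1" by simp
  ultimately show ?thesis
    using assms by (simp add: field_simps power_mult_distrib)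
qed

lemma inverse_sin_squared_minus_inverse_square_bounds:
  fixes x :: real
  assumes "0 < x" "x \<le> pi / 2"
  shows "0 \<le> 1 / sin x ^ 2 - 1 / x ^ 2" and "1 / sin x ^ 2 - 1 / x ^ 2 \<le> 3"
proof -
  define s where "s = sin x"
  have s_le: "s \<le> x"
    unfolding s_def using assms by (intro sin_x_le_x) simp
  have "(\<Sum>m<3. sin_coeff m * x ^ m) = x"
    by (simp add: sin_coeff_def eval_nat_numeral)
  then have "\<bar>s - x\<bar> \<le> inverse (fact 3) * \<bar>x\<bar> ^ 3"
    unfolding s_def using Maclaurin_sin_bound[of x 3] by simp
  then have diff: "x - s \<le> x ^ 3 / 6"
    using assms by (simp add: eval_nat_numeral abs_if split: if_splits)
  have "x ^ 2 \<le> 2 ^ 2"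
    using assms pi_less_4 by (intro power_mono) auto
  then have "x ^ 3 / 6 \<le> x * 2 / 3"
    using assms by (simp add: power3_eq_cube power2_eq_square mult_left_mono)
  then have s_ge: "x / 3 \<le> s" using diff by simp
  then have s_pos: "0 < s" using assms by simp
  have "(x - s) * (x + s) \<le> (x ^ 3 / 6) * (2 * x)"
    using diff s_le s_pos assms by (intro mult_mono) auto
  also have "\<dots> = 3 * (x ^ 2 * (x / 3) ^ 2)"
    by (simp add: power2_eq_square power3_eq_cube)
  also have "\<dots> \<le> 3 * (x ^ 2 * s ^ 2)"
    using s_ge assms by (intro mult_left_mono power_mono) auto
  finally have "(x ^ 2 - s ^ 2) / (x ^ 2 * s ^ 2) \<le> 3"
    using s_pos assms by (simp add: divide_le_eq power2_eq_square algebra_simps)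
  moreover have "0 \<le> x ^ 2 - s ^ 2"
    using s_le s_pos by (simp add: power_mono)
  moreover have "1 / s ^ 2 - 1 / x ^ 2 = (x ^ 2 - s ^ 2) / (x ^ 2 * s ^ 2)"
    using s_pos assms by (simp add: field_simps)
  ultimately show "0 \<le> 1 / sin x ^ 2 - 1 / x ^ 2" "1 / sin x ^ 2 - 1 / x ^ 2 \<le> 3"
    unfolding s_def by simp_all
qed

lemma inverse_sin_squared_minus_poles_bound:
  assumes "0 < x" "x < pi"
  shows "\<bar>1 / sin x ^ 2 - 1 / x ^ 2 - 1 / (x - pi) ^ 2\<bar> \<le> 4"
proof -
  have half: "\<bar>1 / sin y ^ 2 - 1 / y ^ 2 - 1 / (y - pi) ^ 2\<bar> \<le> 4" if "0 < y" "y \<le> pi / 2" for y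
  proof -
    have "1 \<le> \<bar>y - pi\<bar>" using that pi_gt3 by simp
    then have "\<bar>1 / (y - pi) ^ 2\<bar> \<le> 1"
      using abs_inverse_power_le[of 1 "y - pi" 2] by simp
    moreover have "0 \<le> 1 / (y - pi) ^ 2" by simp
    ultimately show ?thesis
      using inverse_sin_squared_minus_inverse_square_bounds[OF that] by linarith
  qed
  show ?thesis
  proof (cases "x \<le> pi / 2")
    case False
    then have "\<bar>1 / sin (pi - x) ^ 2 - 1 / (pi - x) ^ 2 - 1 / (pi - x - pi) ^ 2\<bar> \<le> 4"
      using assms by (intro half) auto
    then show ?thesis by (simp add: power2_commute add.commute)
  qed (use assms half in auto)
qed

lemma pi_lattice_sum_2_minus_poles_bound:
  assumes "0 \<le> x" "x \<le> pi"
  shows "\<bar>pi_lattice_sum 2 x - 1 / x ^ 2 - 1 / (x - pi) ^ 2\<bar> \<le> 2 + (\<Sum>n. 2 / real (n + 2) ^ 2)"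
proof -
  let ?t = "pi_lattice_term 2 x"
  have abs_sum: "summable (\<lambda>n. \<bar>?t n\<bar>)"
    using pi_lattice_term_bounds(3)[OF assms] by (intro summable_abs_if_inverse_square_bound) auto
  have sums: "summable ?t" "summable (\<lambda>n. \<bar>?t (n + 2)\<bar>)"
    using summable_rabs_cancel[OF abs_sum] summable_ignore_initial_segment[OF abs_sum, of 2] .
  have majorant: "summable (\<lambda>n. 2 / real (n + 2) ^ 2)"
    using summable_const_div_square by (rule summable_ignore_initial_segment)
  have split: "pi_lattice_sum 2 x - 1 / x ^ 2 - 1 / (x - pi) ^ 2
      = (\<Sum>n. ?t (n + 2)) + 1 / (x + 1 * pi) ^ 2 + 1 / (x + 2 * pi) ^ 2"
    unfolding pi_lattice_sum_def suminf_split_initial_segment[OF sums(1), of 2]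
    by (simp add: numeral_2_eq_2 pi_lattice_term_def)
  have "\<bar>?t (n + 2)\<bar> \<le> 2 / real (n + 2) ^ 2" for n
    using pi_lattice_term_bounds(3)[OF assms, of "n + 2" 2] by simp
  then have "(\<Sum>n. \<bar>?t (n + 2)\<bar>) \<le> (\<Sum>n. 2 / real (n + 2) ^ 2)"
    by (rule suminf_le[OF _ sums(2) majorant])
  then have tail: "\<bar>\<Sum>n. ?t (n + 2)\<bar> \<le> (\<Sum>n. 2 / real (n + 2) ^ 2)"
    using summable_rabs[OF sums(2)] by linarith
  have near: "\<bar>1 / (x + c * pi) ^ 2\<bar> \<le> 1" if "1 \<le> c" for c :: real
  proof -
    have "1 * 1 \<le> c * pi" using that pi_gt3 by (intro mult_mono) auto
    then have "1 \<le> \<bar>x + c * pi\<bar>" using assms by simp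
    then show ?thesis using abs_inverse_power_le[of 1 "x + c * pi" 2] by simp
  qed
  show ?thesis
    unfolding split using tail near[of 1] near[of 2] by linarith
qed

theorem inverse_sin_squared_partial_fractions:
  assumes "0 < x" "x < pi"
  shows "1 / sin x ^ 2 = pi_lattice_sum 2 x"
proof -
  define g where "g y = 1 / sin y ^ 2 - pi_lattice_sum 2 y" for y
  define K where "K = 6 + (\<Sum>n. 2 / real (n + 2) ^ 2)"
  have "g x = 0"
  proof (rule bounded_duplication_imp_zero[where g = g and a = pi and K = K])
    show "\<bar>g y\<bar> \<le> K" if "y \<in> {0<..<pi}" for y
      using inverse_sin_squared_minus_poles_bound[of y] pi_lattice_sum_2_minus_poles_bound[of y] that
      unfolding g_def K_def by auto
    show "g (y / 2) + g ((y + pi) / 2) = 4 * g y" if "y \<in> {0<..<pi}" for y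
    proof -
      have "sin y \<noteq> 0" using that sin_gt_zero[of y] by simp
      then show ?thesis
        using inverse_sin_squared_duplication[of y] pi_lattice_sum_duplication[of y 2] that
        unfolding g_def by (simp add: algebra_simps)
    qed
  qed (use assms in simp)
  then show ?thesis unfolding g_def by simp
qed

lemma DERIV_inverse_sin_power:
  assumes "sin x \<noteq> 0"
  shows "((\<lambda>x. c / sin x ^ n) has_field_derivative - c * real n * cos x / sin x ^ Suc n) (at x)"
  using DERIV_cmult[OF DERIV_inverse_power[OF DERIV_sin assms, of n], of c] by (simp add: mult.assoc)

lemma DERIV_cos_div_sin_power:
  assumes "sin x \<noteq> 0"
  shows "((\<lambda>x. - c * real n * cos x / sin x ^ Suc n) has_field_derivative
            c * (real (n * (n + 1)) / sin x ^ (n + 2) - real n ^ 2 / sin x ^ n)) (at x)"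
proof -
  have "((\<lambda>x. cos x * (1 / sin x ^ Suc n)) has_field_derivative
          cos x * (- of_nat (Suc n) * cos x / sin x ^ Suc (Suc n)) + - sin x * (1 / sin x ^ Suc n))
          (at x)"
    by (rule DERIV_mult'[OF DERIV_cos DERIV_inverse_power[OF DERIV_sin assms]])
  from DERIV_cmult[OF this, of "- c * real n"]
  have deriv: "((\<lambda>x. - c * real n * cos x / sin x ^ Suc n) has_field_derivative
          - c * real n * (cos x * (- real (Suc n) * cos x / sin x ^ Suc (Suc n)) + - sin x * (1 / sin x ^ Suc n)))
          (at x)"
    by simp
  have "- c * real n * (cos x * (- real (Suc n) * cos x / sin x ^ Suc (Suc n)) + - sin x * (1 / sin x ^ Suc n))
      = c * real n * (real (Suc n) * cos x ^ 2 / sin x ^ Suc (Suc n) + 1 / sin x ^ n)"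
    using assms by (simp add: field_simps power2_eq_square)
  also have "\<dots> = c * real n * (real (Suc n) * (1 - sin x ^ 2) / sin x ^ Suc (Suc n) + 1 / sin x ^ n)"
    by (simp add: cos_squared_eq)
  also have "\<dots> = c * (real (n * (n + 1)) / sin x ^ (n + 2) - real n ^ 2 / sin x ^ n)"
    using assms by (simp add: field_simps power2_eq_square)
  finally show ?thesis
    using deriv by simp
qed

lemma DERIV_unique_on_open:
  assumes "open S" "x \<in> S" "\<And>y. y \<in> S \<Longrightarrow> f y = g y"
    and "(f has_field_derivative D) (at x)" "(g has_field_derivative E) (at x)"
  shows "D = E"
  using has_field_derivative_transform_within_open[OF assms(4,1,2,3)] assms(5) by (rule DERIV_unique)

lemma DERIV_pi_lattice_sum_combination:
  assumes "0 < x" "x < pi" "\<And>j. j < v \<Longrightarrow> 2 \<le> k j"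
  shows "((\<lambda>y. \<Sum>j<v. a j * pi_lattice_sum (k j) y) has_field_derivative
            (\<Sum>j<v. a j * (- real (k j)) * pi_lattice_sum (Suc (k j)) x)) (at x)"
proof (rule DERIV_sum)
  fix j assume "j \<in> {..<v}"
  then have "2 \<le> k j" using assms(3) by simp
  from DERIV_cmult[OF pi_lattice_sum_deriv[OF assms(1,2) this], of "a j"]
  show "((\<lambda>y. a j * pi_lattice_sum (k j) y) has_field_derivative
          a j * (- real (k j)) * pi_lattice_sum (Suc (k j)) x) (at x)"
    by (simp add: mult.assoc)
qed

theorem csc_power_partial_fractions:
  assumes "1 \<le> v" "0 < x" "x < pi"
  shows "fact (2 * v - 1) / sin x ^ (2 * v) = (\<Sum>j<v. csc_pow_coeff v j * pi_lattice_sum (2 * (v - j)) x)"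
  using assms
proof (induction v arbitrary: x rule: nat_induct_at_least)
  case base
  then show ?case
    using inverse_sin_squared_partial_fractions[of x] by (simp add: csc_pow_coeff_def)
next
  case (Suc v)
  define S where "S = {0<..<pi}"
  define F where "F = (fact (2 * v - 1) :: real)"
  define a where "a j = csc_pow_coeff v j" for j
  define k where "k j = 2 * (v - j)" for j
  have S: "open S" "x \<in> S" "\<And>y. y \<in> S \<Longrightarrow> sin y \<noteq> 0"
    using Suc.prems sin_gt_zero by (auto simp: S_def) (metis less_irrefl)
  have k2: "\<And>j. j < v \<Longrightarrow> 2 \<le> k j" by (simp add: k_def)
  have eq: "F / sin y ^ (2 * v) = (\<Sum>j<v. a j * pi_lattice_sum (k j) y)" if "y \<in> S" for y
    using Suc.IH[of y] that by (simp add: S_def F_def a_def k_def)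
  have "- F * real (2 * v) * cos y / sin y ^ Suc (2 * v)
        = (\<Sum>j<v. a j * (- real (k j)) * pi_lattice_sum (Suc (k j)) y)" if "y \<in> S" for y
    using S eq that
    by (intro DERIV_unique_on_open[OF S(1) that _ DERIV_inverse_sin_power DERIV_pi_lattice_sum_combination])
       (auto simp: S_def k2)
  then have "F * (real (2 * v * (2 * v + 1)) / sin x ^ (2 * v + 2) - real (2 * v) ^ 2 / sin x ^ (2 * v))
        = (\<Sum>j<v. a j * (- real (k j)) * (- real (Suc (k j))) * pi_lattice_sum (Suc (Suc (k j))) x)"
    using S Suc.prems
    by (intro DERIV_unique_on_open[OF S(1,2) _ DERIV_cos_div_sin_power DERIV_pi_lattice_sum_combination])
       (auto simp: S_def k_def)
  also have "\<dots> = (\<Sum>j<v. a j * real (k j) * real (k j + 1) * pi_lattice_sum (k j + 2) x)"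
    by (simp add: algebra_simps)
  finally have "F * real (2 * v * (2 * v + 1)) / sin x ^ (2 * v + 2)
      = (\<Sum>j<v. a j * real (k j) * real (k j + 1) * pi_lattice_sum (k j + 2) x)
        + real (2 * v) ^ 2 * (F / sin x ^ (2 * v))"
    by (simp add: algebra_simps)
  moreover have "fact (2 * Suc v - 1) = F * real (2 * v * (2 * v + 1))"
    using fact_odd_Suc[OF Suc.hyps, where 'a=real] by (simp add: F_def mult.commute)
  ultimately have "fact (2 * Suc v - 1) / sin x ^ (2 * Suc v)
      = (\<Sum>j<v. a j * real (k j) * real (k j + 1) * pi_lattice_sum (k j + 2) x)
        + 4 * real v ^ 2 * (\<Sum>j<v. a j * pi_lattice_sum (k j) x)"
    using eq[OF S(2)] by (simp add: power_mult_distrib)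
  also have "\<dots> = (\<Sum>j<Suc v. csc_pow_coeff (Suc v) j * pi_lattice_sum (2 * (Suc v - j)) x)"
    using csc_pow_coeff_sum_Suc[OF Suc.hyps, of "\<lambda>m. pi_lattice_sum m x"]
    by (simp add: a_def k_def)
  finally show ?case .
qed

section \<open>Evaluation at \<open>\<pi> / 4\<close>\<close>

lemma zeta_real_has_sum:
  assumes "2 \<le> K"
  shows "((\<lambda>k::nat. 1 / real k ^ K) has_sum zeta_real (real K)) {1..}"
proof -
  have "summable (\<lambda>n. 1 / real (Suc n) ^ K)"
    using inverse_power_summable[OF assms, where 'a=real]
    by (subst (asm) summable_Suc_iff[symmetric]) (simp add: divide_inverse)
  then have "((\<lambda>n. 1 / real (Suc n) ^ K) has_sum zeta_real (real K)) UNIV"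
    unfolding zeta_real_def powr_realpow[OF of_nat_0_less_iff[THEN iffD2, OF zero_less_Suc]]
    by (intro norm_summable_imp_has_sum) (simp_all add: summable_sums)
  moreover have "{1::nat..} = range Suc" by (auto simp: image_iff dest: Suc_le_D)
  ultimately show ?thesis
    by (simp add: has_sum_reindex o_def)
qed

lemma odd_inverse_power_has_sum:
  assumes "2 \<le> K"
  shows "((\<lambda>k::nat. 1 / real k ^ K) has_sum (1 - 1 / 2 ^ K) * zeta_real (real K)) {k. odd k}"
proof -
  define f where "f k = 1 / real k ^ K" for k :: nat
  define z where "z = zeta_real (real K)"
  have all: "(f has_sum z) {1..}"
    unfolding f_def z_def by (rule zeta_real_has_sum[OF assms])
  have "((\<lambda>k. f k / 2 ^ K) has_sum z / 2 ^ K) {1..}"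
    using all by (rule has_sum_divide_const)
  then have even: "(f has_sum z / 2 ^ K) ((\<lambda>k. 2 * k) ` {1..})"
    by (simp add: has_sum_reindex inj_on_def o_def f_def power_mult_distrib mult.commute)
  have "{k::nat. odd k} \<subseteq> {1..}" by (auto simp: Suc_le_eq odd_pos)
  then obtain s where odd: "(f has_sum s) {k. odd k}"
    using summable_on_subset_banach[OF has_sum_imp_summable[OF all]] by (auto simp: summable_on_def)
  have "{k::nat. odd k} \<inter> (\<lambda>k. 2 * k) ` {1..} = {}" by auto
  from has_sum_Un_disjoint[OF odd even this]
  have "(f has_sum s + z / 2 ^ K) ({k. odd k} \<union> (\<lambda>k. 2 * k) ` {1..})" .
  moreover have "{k::nat. odd k} \<union> (\<lambda>k. 2 * k) ` {1..} = {1..}"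
    by (auto simp: Suc_le_eq odd_pos image_iff elim!: evenE)
  ultimately have "z = s + z / 2 ^ K"
    using all has_sum_unique by fastforce
  then have "s = (1 - 1 / 2 ^ K) * z" by (simp add: algebra_simps)
  then show ?thesis using odd unfolding f_def z_def by simp
qed

lemma bij_betw_abs_one_minus_four_times:
  "bij_betw (\<lambda>n::int. nat \<bar>1 - 4 * n\<bar>) UNIV {k. odd k}"
proof (rule bij_betw_imageI)
  show "inj (\<lambda>n::int. nat \<bar>1 - 4 * n\<bar>)"
  proof (rule injI)
    fix n m :: int assume "nat \<bar>1 - 4 * n\<bar> = nat \<bar>1 - 4 * m\<bar>"
    then have "int (nat \<bar>1 - 4 * n\<bar>) = int (nat \<bar>1 - 4 * m\<bar>)" by simp
    then have "1 - 4 * n = 1 - 4 * m \<or> 1 - 4 * n = - (1 - 4 * m)"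
      by (simp only: int_nat_eq abs_ge_zero if_True abs_eq_iff)
    then show "n = m" by presburger
  qed
  show "range (\<lambda>n::int. nat \<bar>1 - 4 * n\<bar>) = {k. odd k}"
  proof (intro equalityI subsetI)
    fix k :: nat assume "k \<in> {k. odd k}"
    then have "k mod 4 = 1 \<or> k mod 4 = 3" by (simp add: odd_iff_mod_2_eq_one) presburger
    then have "int k = 1 - 4 * (- int (k div 4)) \<or> int k = - (1 - 4 * (int (k div 4) + 1))"
      by presburger
    then show "k \<in> range (\<lambda>n::int. nat \<bar>1 - 4 * n\<bar>)"
      by (metis (no_types, lifting) abs_minus_cancel abs_of_nat nat_int rangeI)
  next
    fix k assume "k \<in> range (\<lambda>n::int. nat \<bar>1 - 4 * n\<bar>)"
    then obtain n :: int where k: "k = nat \<bar>1 - 4 * n\<bar>" by blast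
    have "odd (1 - 4 * n)" by presburger
    then show "k \<in> {k. odd k}" unfolding k by (simp add: even_nat_iff)
  qed
qed

lemma pi_lattice_sum_quarter:
  assumes "1 \<le> m"
  shows "pi_lattice_sum (2 * m) (pi / 4) = (2 ^ (2 * m) - 1) * (2 / pi) ^ (2 * m) * zeta_real (real (2 * m))"
proof -
  have scaled: "1 / (pi / 4 - of_int n * pi) ^ (2 * m)
      = (4 / pi) ^ (2 * m) * (1 / real (nat \<bar>1 - 4 * n\<bar>) ^ (2 * m))" for n :: int
  proof -
    have "pi / 4 - of_int n * pi = pi / 4 * of_int (1 - 4 * n)" by (simp add: algebra_simps)
    then have "(pi / 4 - of_int n * pi) ^ (2 * m) = (pi / 4) ^ (2 * m) * (of_int (1 - 4 * n)) ^ (2 * m)"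
      by (simp only: power_mult_distrib)
    also have "(of_int (1 - 4 * n) :: real) ^ (2 * m) = real (nat \<bar>1 - 4 * n\<bar>) ^ (2 * m)"
      using power_even_abs[of "2 * m" "of_int (1 - 4 * n) :: real"] by simp
    finally show ?thesis by (simp add: power_divide)
  qed
  have odd: "((\<lambda>n::int. 1 / real (nat \<bar>1 - 4 * n\<bar>) ^ (2 * m)) has_sum
                  (1 - 1 / 2 ^ (2 * m)) * zeta_real (real (2 * m))) UNIV"
    using has_sum_reindex_bij_betw[OF bij_betw_abs_one_minus_four_times, of "\<lambda>k. 1 / real k ^ (2 * m)"]
      odd_inverse_power_has_sum[of "2 * m"] assms by simp
  have "((\<lambda>n::int. 1 / (pi / 4 - of_int n * pi) ^ (2 * m)) has_sum
        (4 / pi) ^ (2 * m) * ((1 - 1 / 2 ^ (2 * m)) * zeta_real (real (2 * m)))) UNIV"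
    using has_sum_cmult_right[OF odd, of "(4 / pi) ^ (2 * m)"] by (simp only: scaled)
  with pi_lattice_sum_has_sum[of "pi / 4" "2 * m"] assms
  have "pi_lattice_sum (2 * m) (pi / 4)
      = (4 / pi) ^ (2 * m) * (1 - 1 / 2 ^ (2 * m)) * zeta_real (real (2 * m))"
    by (simp add: has_sum_unique mult.assoc)
  moreover have "(4 / pi) ^ (2 * m) * (1 - 1 / 2 ^ (2 * m)) = (2 ^ (2 * m) - 1) * (2 / pi) ^ (2 * m)"
  proof -
    have "(4 / pi) ^ (2 * m) = 2 ^ (2 * m) * (2 / pi) ^ (2 * m)"
      by (simp add: power_mult_distrib[symmetric])
    then have "(4 / pi) ^ (2 * m) * (1 - 1 / 2 ^ (2 * m))
        = (2 ^ (2 * m) * (1 - 1 / 2 ^ (2 * m))) * (2 / pi) ^ (2 * m)"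
      by (simp only: mult_ac)
    also have "(2::real) ^ (2 * m) * (1 - 1 / 2 ^ (2 * m)) = 2 ^ (2 * m) - 1"
      by (simp add: right_diff_distrib)
    finally show ?thesis .
  qed
  ultimately show ?thesis by simp
qed

lemma summand_eq_csc_pow_coeff_mult_lattice_sum:
  assumes "1 \<le> v" "i < v"
  shows "(2 ^ (2 * v - 2 * i) * cosec_num (2 * v) i
            - 2 ^ (2 * i) / fact (2 * v - 1) * esym_sq v i * Gamma (real (2 * v - 2 * i)))
          * (pi / 2) powr (real (2 * i) - real (2 * v)) * zeta_real (real (2 * v - 2 * i))
        = csc_pow_coeff v i / fact (2 * v - 1) * pi_lattice_sum (2 * (v - i)) (pi / 4)"
proof -
  define m where "m = v - i"
  define c where "c = csc_pow_coeff v i / fact (2 * v - 1)"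
  have m: "1 \<le> m" "2 * v - 2 * i = 2 * m" "real (2 * i) - real (2 * v) = - real (2 * m)"
    using assms by (simp_all add: m_def of_nat_diff)
  have "Gamma (real (2 * m)) = fact (2 * m - 1)"
    using Gamma_fact[of "2 * m - 1"] m(1) by (simp add: of_nat_diff)
  then have "2 ^ (2 * i) / fact (2 * v - 1) * esym_sq v i * Gamma (real (2 * m)) = c"
    unfolding c_def csc_pow_coeff_def m_def by (simp add: power_mult)
  moreover have "cosec_num (2 * v) i = c"
    unfolding c_def by (rule cosec_num_eq_csc_pow_coeff[OF assms])
  moreover have "(pi / 2) powr (- real (2 * m)) = (2 / pi) ^ (2 * m)"
  proof -
    have "(pi / 2) powr real (2 * m) = (pi / 2) ^ (2 * m)" by (rule powr_realpow) simp
    then show ?thesis unfolding powr_minus by (simp add: power_divide)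
  qed
  ultimately show ?thesis
    unfolding m(2,3) m_def[symmetric] pi_lattice_sum_quarter[OF m(1)] c_def[symmetric]
    by (simp add: algebra_simps)
qed

theorem mainTheorem6:
  fixes v :: nat
  assumes "v \<ge> 1"
  shows "(\<Sum>i<v. (2 ^ (2 * v - 2 * i) * cosec_num (2 * v) i
            - 2 ^ (2 * i) / fact (2 * v - 1) * esym_sq v i * Gamma (real (2 * v - 2 * i)))
          * (pi / 2) powr (real (2 * i) - real (2 * v)) * zeta_real (real (2 * v - 2 * i)))
         = 2 ^ v"
proof -
  have "sin (pi / 4) ^ (2 * v) = (1 / 2) ^ v"
    by (simp add: power_mult sin_45 power_divide)
  then have "fact (2 * v - 1) * 2 ^ v = fact (2 * v - 1) / sin (pi / 4) ^ (2 * v)"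
    by (simp add: power_one_over)
  also have "\<dots> = (\<Sum>i<v. csc_pow_coeff v i * pi_lattice_sum (2 * (v - i)) (pi / 4))"
    using assms pi_gt_zero by (intro csc_power_partial_fractions) auto
  finally show ?thesis
    using summand_eq_csc_pow_coeff_mult_lattice_sum[OF assms]
    by (simp add: sum_divide_distrib[symmetric] field_simps)
qed

end
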